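(* There exists a unique $\mathbb{Q}(q)$-algebra anti-isomorphism $\sigma\colon \mathrm{El}^\vee_\epsilon\to \mathrm{El}_\epsilon$ with $\sigma(\mathcal{E}_i)=q^{-\epsilon}\mathcal{E}_{i+1}$ for all $i\in\mathbb{Z}$ (anti-isomorphism: $\mathbb{Q}(q)$-linear bijection with $\sigma(uv)=\sigma(v)\sigma(u)$ and $\sigma(1)=1$).
   Context: $\mathbb{Q}(q)$ is the field of rational functions in $q$ over $\mathbb{Q}$; $[2]=q+q^{-1}$. Fix $\epsilon\in\{1,-1\}$. For $i,j\in\mathbb{Z}$ put $b_{ij}=-2$ if $j\in\{i,i+1\}$ and $b_{ij}=4\,\mathrm{sgn}(j-i)(-1)^{j-i}$ otherwise. The $q$-electrical algebra $\mathrm{El}_\epsilon$ is the $\mathbb{Q}(q)$-algebra generated by $\mathcal{E}_i$, $i\in\mathbb{Z}$, subject to: (1) $\mathcal{E}_i\mathcal{E}_j=q^{b_{ij}}\mathcal{E}_j\mathcal{E}_i$ if $|i-j|>1$; (2) $q^3\mathcal{E}_i^2\mathcal{E}_{i+1}-[2]\mathcal{E}_i\mathcal{E}_{i+1}\mathcal{E}_i+q^{-3}\mathcal{E}_{i+1}\mathcal{E}_i^2=-q^{\epsilon}[2]\mathcal{E}_i$; (3) $q^{-3}\mathcal{E}_i^2\mathcal{E}_{i-1}-[2]\mathcal{E}_i\mathcal{E}_{i-1}\mathcal{E}_i+q^{3}\mathcal{E}_{i-1}\mathcal{E}_i^2=-q^{\epsilon}[2]\mathcal{E}_i$, for all $i,j\in\mathbb{Z}$.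 The algebra $\mathrm{El}^\vee_\epsilon$ is the $\mathbb{Q}(q)$-algebra generated by $\mathcal{E}_i$, $i\in\mathbb{Z}$, subject to: (1') $\mathcal{E}_i\mathcal{E}_j=q^{-b_{ij}}\mathcal{E}_j\mathcal{E}_i$ if $|i-j|>1$; (2') $q^{-3}\mathcal{E}_i^2\mathcal{E}_{i+1}-[2]\mathcal{E}_i\mathcal{E}_{i+1}\mathcal{E}_i+q^{3}\mathcal{E}_{i+1}\mathcal{E}_i^2=-q^{-\epsilon}[2]\mathcal{E}_i$; (3') $q^{3}\mathcal{E}_i^2\mathcal{E}_{i-1}-[2]\mathcal{E}_i\mathcal{E}_{i-1}\mathcal{E}_i+q^{-3}\mathcal{E}_{i-1}\mathcal{E}_i^2=-q^{-\epsilon}[2]\mathcal{E}_i$. *)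

theory Defs
  imports "HOL-Algebra.QuotRing" "HOL-Computational_Algebra.Fraction_Field"
          "HOL-Computational_Algebra.Polynomial"
begin

type_synonym K = "rat poly fract"

definition qq :: K where "qq = Fraction_Field.Fract [:0, 1:] 1"
definition qint2 :: K where "qint2 = qq + inverse qq"

text \<open>Free associative Q(q)-algebra on generators indexed by int:
  elements are finitely supported functions from words (int lists) to Q(q).\<close>
type_synonym fa = "int list \<Rightarrow> K"

definition fa_carrier :: "fa set" where
  "fa_carrier = {f. finite {w. f w \<noteq> 0}}"
definition fa_add :: "fa \<Rightarrow> fa \<Rightarrow> fa" where
  "fa_add f g = (\<lambda>w. f w + g w)"
definition fa_mult :: "fa \<Rightarrow> fa \<Rightarrow> fa" where
  "fa_mult f g = (\<lambda>w. \<Sum>k\<le>length w. f (take k w) * g (drop k w))"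
definition fa_zero :: fa where "fa_zero = (\<lambda>w. 0)"
definition fa_one :: fa where "fa_one = (\<lambda>w. if w = [] then 1 else 0)"
definition fa_smul :: "K \<Rightarrow> fa \<Rightarrow> fa" where
  "fa_smul c f = (\<lambda>w. c * f w)"
definition gen :: "int \<Rightarrow> fa" where
  "gen i = (\<lambda>w. if w = [i] then 1 else 0)"

definition FA :: "fa ring" where
  "FA = \<lparr>carrier = fa_carrier, Group.monoid.mult = fa_mult, Group.monoid.one = fa_one,
         Ring.ring.zero = fa_zero, Ring.ring.add = fa_add\<rparr>"

definition fa_diff :: "fa \<Rightarrow> fa \<Rightarrow> fa" where
  "fa_diff f g = (\<lambda>w. f w - g w)"
definition m3 :: "fa \<Rightarrow> fa \<Rightarrow> fa \<Rightarrow> fa" where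
  "m3 a b c = fa_mult a (fa_mult b c)"

definition bexp :: "int \<Rightarrow> int \<Rightarrow> int" where
  "bexp i j = (if j = i \<or> j = i + 1 then -2
               else 4 * sgn (j - i) * (-1) ^ nat \<bar>j - i\<bar>)"

text \<open>Defining relations of El_eps (written as elements LHS - RHS).\<close>
definition rels :: "int \<Rightarrow> fa set" where
  "rels eps =
     {fa_diff (fa_mult (gen i) (gen j)) (fa_smul (qq powi bexp i j) (fa_mult (gen j) (gen i)))
        | i j. \<bar>i - j\<bar> > 1}
   \<union> {fa_add (fa_add (fa_add (fa_smul (qq powi 3) (m3 (gen i) (gen i) (gen (i+1))))
                           (fa_smul (- qint2) (m3 (gen i) (gen (i+1)) (gen i))))
                   (fa_smul (qq powi (-3)) (m3 (gen (i+1)) (gen i) (gen i))))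
            (fa_smul (qq powi eps * qint2) (gen i)) | i. True}
   \<union> {fa_add (fa_add (fa_add (fa_smul (qq powi (-3)) (m3 (gen i) (gen i) (gen (i-1))))
                           (fa_smul (- qint2) (m3 (gen i) (gen (i-1)) (gen i))))
                   (fa_smul (qq powi 3) (m3 (gen (i-1)) (gen i) (gen i))))
            (fa_smul (qq powi eps * qint2) (gen i)) | i. True}"

definition relsv :: "int \<Rightarrow> fa set" where
  "relsv eps =
     {fa_diff (fa_mult (gen i) (gen j)) (fa_smul (qq powi (- bexp i j)) (fa_mult (gen j) (gen i)))
        | i j. \<bar>i - j\<bar> > 1}
   \<union> {fa_add (fa_add (fa_add (fa_smul (qq powi (-3)) (m3 (gen i) (gen i) (gen (i+1))))
                           (fa_smul (- qint2) (m3 (gen i) (gen (i+1)) (gen i))))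
                   (fa_smul (qq powi 3) (m3 (gen (i+1)) (gen i) (gen i))))
            (fa_smul (qq powi (-eps) * qint2) (gen i)) | i. True}
   \<union> {fa_add (fa_add (fa_add (fa_smul (qq powi 3) (m3 (gen i) (gen i) (gen (i-1))))
                           (fa_smul (- qint2) (m3 (gen i) (gen (i-1)) (gen i))))
                   (fa_smul (qq powi (-3)) (m3 (gen (i-1)) (gen i) (gen i))))
            (fa_smul (qq powi (-eps) * qint2) (gen i)) | i. True}"

text \<open>The algebras as quotients of the free algebra by two-sided ideals
  (HOL-Algebra's ideal is two-sided).\<close>
definition El_ideal :: "int \<Rightarrow> fa set" where "El_ideal eps = genideal FA (rels eps)"
definition Elv_ideal :: "int \<Rightarrow> fa set" where "Elv_ideal eps = genideal FA (relsv eps)"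

definition El :: "int \<Rightarrow> fa set ring" where "El eps = FA Quot El_ideal eps"
definition Elv :: "int \<Rightarrow> fa set ring" where "Elv eps = FA Quot Elv_ideal eps"

definition cls :: "fa set \<Rightarrow> fa \<Rightarrow> fa set" where
  "cls I f = I +>\<^bsub>FA\<^esub> f"

text \<open>Q(q)-algebra anti-isomorphism FA/I -> FA/J. Linearity is expressed through
  the structure maps c |-> c*1 of the two Q(q)-algebras.\<close>
definition anti_iso :: "fa set \<Rightarrow> fa set \<Rightarrow> (fa set \<Rightarrow> fa set) \<Rightarrow> bool" where
  "anti_iso I J s \<longleftrightarrow>
     bij_betw s (carrier (FA Quot I)) (carrier (FA Quot J))
   \<and> (\<forall>x\<in>carrier (FA Quot I). \<forall>y\<in>carrier (FA Quot I).
        s (x \<oplus>\<^bsub>FA Quot I\<^esub> y) = s x \<oplus>\<^bsub>FA Quot J\<^esub> s y)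
   \<and> (\<forall>c. \<forall>x\<in>carrier (FA Quot I).
        s (cls I (fa_smul c fa_one) \<otimes>\<^bsub>FA Quot I\<^esub> x)
          = cls J (fa_smul c fa_one) \<otimes>\<^bsub>FA Quot J\<^esub> s x)
   \<and> (\<forall>x\<in>carrier (FA Quot I). \<forall>y\<in>carrier (FA Quot I).
        s (x \<otimes>\<^bsub>FA Quot I\<^esub> y) = s y \<otimes>\<^bsub>FA Quot J\<^esub> s x)
   \<and> s \<one>\<^bsub>FA Quot I\<^esub> = \<one>\<^bsub>FA Quot J\<^esub>"

end

theory Submission imports Defs begin

text \<open>
  Reversing words in the free algebra and shifting every letter up by one turns each defining
  relation of El^\<vee>, after rescaling a word of length n by q powi (-\<epsilon> n), into a scalar
  multiple of a defining relation of El; the inverse map sends the relations of El back to multiples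
  of those of El^\<vee>. Hence this linear anti-automorphism of the free algebra carries the ideal of
  El^\<vee> onto that of El and descends to the required anti-isomorphism. Uniqueness holds because the
  quotient is generated as an algebra by the scalars and the classes of the generators.
  The argument works for every integer \<epsilon>.
\<close>

subsection \<open>The free algebra\<close>

definition splits :: "int list \<Rightarrow> (int list \<times> int list) set" where
  "splits w = {p. fst p @ snd p = w}"

lemma splits_eq_image: "splits w = (\<lambda>k. (take k w, drop k w)) ` {..length w}"
proof
  show "splits w \<subseteq> (\<lambda>k. (take k w, drop k w)) ` {..length w}"
  proof
    fix p assume "p \<in> splits w"
    then have "fst p @ snd p = w" by (simp add: splits_def)
    then have "p = (take (length (fst p)) w, drop (length (fst p)) w)" and "length (fst p) \<le> length w"
      by (auto simp: prod_eq_iff)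
    then show "p \<in> (\<lambda>k. (take k w, drop k w)) ` {..length w}" by blast
  qed
qed (auto simp: splits_def)

lemma finite_splits [simp]: "finite (splits w)"
  by (simp add: splits_eq_image)

lemma fa_mult_splits: "fa_mult f g w = (\<Sum>p\<in>splits w. f (fst p) * g (snd p))"
proof -
  have "inj_on (\<lambda>k. (take k w, drop k w)) {..length w}"
    by (rule inj_onI) (metis atMost_iff length_take min.absorb2 prod.inject)
  then show ?thesis
    unfolding fa_mult_def splits_eq_image by (simp add: sum.reindex)
qed

definition splits3 :: "int list \<Rightarrow> (int list \<times> int list \<times> int list) set" where
  "splits3 w = {t. fst t @ fst (snd t) @ snd (snd t) = w}"

lemma fa_mult_assoc_left: "fa_mult (fa_mult f g) h w =
    (\<Sum>t\<in>splits3 w. f (fst t) * g (fst (snd t)) * h (snd (snd t)))"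
proof -
  have "fa_mult (fa_mult f g) h w =
      (\<Sum>(p, q)\<in>(SIGMA p:splits w. splits (fst p)). f (fst q) * g (snd q) * h (snd p))"
    by (simp add: fa_mult_splits sum_distrib_right sum.Sigma)
  also have "\<dots> = (\<Sum>t\<in>splits3 w. f (fst t) * g (fst (snd t)) * h (snd (snd t)))"
    by (rule sum.reindex_bij_witness[where
          i = "\<lambda>t. ((fst t @ fst (snd t), snd (snd t)), (fst t, fst (snd t)))"
          and j = "\<lambda>(p, q). (fst q, snd q, snd p)"])
       (auto simp: splits3_def splits_def)
  finally show ?thesis .
qed

lemma fa_mult_assoc_right: "fa_mult f (fa_mult g h) w =
    (\<Sum>t\<in>splits3 w. f (fst t) * g (fst (snd t)) * h (snd (snd t)))"
proof -
  have "fa_mult f (fa_mult g h) w =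
      (\<Sum>(p, q)\<in>(SIGMA p:splits w. splits (snd p)). f (fst p) * g (fst q) * h (snd q))"
    by (simp add: fa_mult_splits sum_distrib_left mult.assoc sum.Sigma)
  also have "\<dots> = (\<Sum>t\<in>splits3 w. f (fst t) * g (fst (snd t)) * h (snd (snd t)))"
    by (rule sum.reindex_bij_witness[where
          i = "\<lambda>t. ((fst t, fst (snd t) @ snd (snd t)), (fst (snd t), snd (snd t)))"
          and j = "\<lambda>(p, q). (fst p, fst q, snd q)"])
       (auto simp: splits3_def splits_def)
  finally show ?thesis .
qed

lemma fa_mult_assoc: "fa_mult (fa_mult f g) h = fa_mult f (fa_mult g h)"
  by (rule ext) (simp add: fa_mult_assoc_left fa_mult_assoc_right)

lemma fa_one_mult [simp]: "fa_mult fa_one f = f"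
proof (rule ext)
  fix w
  have "fa_mult fa_one f w = (\<Sum>p\<in>splits w. if p = ([], w) then f w else 0)"
    unfolding fa_mult_splits fa_one_def by (rule sum.cong) (auto simp: splits_def)
  then show "fa_mult fa_one f w = f w"
    by (simp only: sum.delta[OF finite_splits]) (simp add: splits_def)
qed

lemma fa_mult_one [simp]: "fa_mult f fa_one = f"
proof (rule ext)
  fix w
  have "fa_mult f fa_one w = (\<Sum>p\<in>splits w. if p = (w, []) then f w else 0)"
    unfolding fa_mult_splits fa_one_def by (rule sum.cong) (auto simp: splits_def)
  then show "fa_mult f fa_one w = f w"
    by (simp only: sum.delta[OF finite_splits]) (simp add: splits_def)
qed

lemma fa_mult_add_left: "fa_mult (fa_add f g) h = fa_add (fa_mult f h) (fa_mult g h)"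
  by (rule ext) (simp add: fa_mult_def fa_add_def distrib_right sum.distrib)

lemma fa_mult_add_right: "fa_mult h (fa_add f g) = fa_add (fa_mult h f) (fa_mult h g)"
  by (rule ext) (simp add: fa_mult_def fa_add_def distrib_left sum.distrib)

lemma fa_mult_smul_left: "fa_mult (fa_smul c f) g = fa_smul c (fa_mult f g)"
  by (rule ext) (simp add: fa_mult_def fa_smul_def sum_distrib_left mult.assoc)

lemma fa_mult_smul_right: "fa_mult f (fa_smul c g) = fa_smul c (fa_mult f g)"
  by (rule ext) (simp add: fa_mult_def fa_smul_def sum_distrib_left mult.left_commute)

lemma fa_smul_smul [simp]: "fa_smul a (fa_smul b f) = fa_smul (a * b) f"
  by (rule ext) (simp add: fa_smul_def)

lemma fa_smul_eq_mult: "fa_smul c f = fa_mult (fa_smul c fa_one) f"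
  by (simp add: fa_mult_smul_left)

lemma fa_mult_closed: "f \<in> fa_carrier \<Longrightarrow> g \<in> fa_carrier \<Longrightarrow> fa_mult f g \<in> fa_carrier"
proof -
  assume "f \<in> fa_carrier" "g \<in> fa_carrier"
  moreover have "{w. fa_mult f g w \<noteq> 0} \<subseteq> (\<lambda>(u, v). u @ v) ` ({w. f w \<noteq> 0} \<times> {w. g w \<noteq> 0})"
  proof
    fix w assume "w \<in> {w. fa_mult f g w \<noteq> 0}"
    then obtain p where "p \<in> splits w" "f (fst p) * g (snd p) \<noteq> 0"
      by (auto simp: fa_mult_splits intro: sum.not_neutral_contains_not_neutral)
    then show "w \<in> (\<lambda>(u, v). u @ v) ` ({w. f w \<noteq> 0} \<times> {w. g w \<noteq> 0})"
      by (auto simp: splits_def image_iff intro!: bexI[of _ "(fst p, snd p)"])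
  qed
  ultimately show ?thesis
    unfolding fa_carrier_def by (auto intro: finite_subset)
qed

lemma fa_add_closed: "f \<in> fa_carrier \<Longrightarrow> g \<in> fa_carrier \<Longrightarrow> fa_add f g \<in> fa_carrier"
  unfolding fa_carrier_def fa_add_def
  by (auto intro: finite_subset[of _ "{w. f w \<noteq> 0} \<union> {w. g w \<noteq> 0}"])

lemma fa_smul_closed: "f \<in> fa_carrier \<Longrightarrow> fa_smul c f \<in> fa_carrier"
  unfolding fa_carrier_def fa_smul_def by (auto elim!: finite_subset[rotated])

lemma fa_diff_closed: "f \<in> fa_carrier \<Longrightarrow> g \<in> fa_carrier \<Longrightarrow> fa_diff f g \<in> fa_carrier"
  unfolding fa_carrier_def fa_diff_def
  by (auto intro: finite_subset[of _ "{w. f w \<noteq> 0} \<union> {w. g w \<noteq> 0}"])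

lemma m3_closed: "x \<in> fa_carrier \<Longrightarrow> y \<in> fa_carrier \<Longrightarrow> z \<in> fa_carrier \<Longrightarrow> m3 x y z \<in> fa_carrier"
  by (simp add: m3_def fa_mult_closed)

lemma fa_one_closed [simp]: "fa_one \<in> fa_carrier"
  unfolding fa_carrier_def fa_one_def by simp

lemma fa_zero_closed [simp]: "fa_zero \<in> fa_carrier"
  unfolding fa_carrier_def fa_zero_def by simp

lemma gen_closed [simp]: "gen i \<in> fa_carrier"
  unfolding fa_carrier_def gen_def by simp

lemma FA_simps [simp]:
  "carrier FA = fa_carrier" "Group.monoid.mult FA = fa_mult" "one FA = fa_one"
  "Ring.ring.zero FA = fa_zero" "Ring.ring.add FA = fa_add"
  by (simp_all add: FA_def)

lemma ring_FA: "ring FA"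
proof (rule ringI)
  show "abelian_group FA"
  proof (rule abelian_groupI)
    fix x assume "x \<in> carrier FA"
    then have "(\<lambda>w. - x w) \<in> carrier FA" "fa_add (\<lambda>w. - x w) x = fa_zero"
      by (auto simp: fa_carrier_def fa_add_def fa_zero_def)
    then show "\<exists>y\<in>carrier FA. y \<oplus>\<^bsub>FA\<^esub> x = \<zero>\<^bsub>FA\<^esub>" by auto
  qed (auto simp: fa_add_closed[unfolded fa_add_def] fa_zero_closed[unfolded fa_zero_def]
      fa_add_def fa_zero_def add.assoc add.commute)
  show "monoid FA"
    by (rule monoidI) (auto simp: fa_mult_closed fa_mult_assoc)
qed (auto simp: fa_mult_add_left fa_mult_add_right)

interpretation FA: ring FA by (rule ring_FA)

lemma fa_smul_in_ideal: "ideal I FA \<Longrightarrow> r \<in> I \<Longrightarrow> fa_smul c r \<in> I"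
  by (subst fa_smul_eq_mult) (metis FA_simps(1,2) fa_one_closed fa_smul_closed ideal.I_l_closed)

lemma a_inv_FA: "x \<in> fa_carrier \<Longrightarrow> \<ominus>\<^bsub>FA\<^esub> x = fa_smul (-1) x"
proof -
  assume x: "x \<in> fa_carrier"
  have "fa_add (fa_smul (-1) x) x = fa_zero"
    by (rule ext) (simp add: fa_add_def fa_smul_def fa_zero_def)
  then show ?thesis
    using FA.minus_equality[of "fa_smul (-1) x" x] x fa_smul_closed[OF x] by simp
qed

definition fa_mono :: "int list \<Rightarrow> fa" where
  "fa_mono w = (\<lambda>v. if v = w then 1 else 0)"

lemma gen_mult_fa_mono: "fa_mult (gen i) (fa_mono w) = fa_mono (i # w)"
proof (rule ext)
  fix x
  have "fa_mult (gen i) (fa_mono w) x = (\<Sum>p\<in>splits x. if p = ([i], w) then 1 else 0)"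
    unfolding fa_mult_splits by (rule sum.cong) (auto simp: gen_def fa_mono_def prod_eq_iff)
  then show "fa_mult (gen i) (fa_mono w) x = fa_mono (i # w) x"
    by (simp only: sum.delta[OF finite_splits]) (simp add: splits_def fa_mono_def)
qed

text \<open>Every element is a finite sum of scalar multiples of monomials, and every monomial is a
  product of generators.\<close>

lemma fa_induct [consumes 1, case_names scalar gen add mult]:
  assumes f: "f \<in> fa_carrier"
    and scalar: "\<And>c. P (fa_smul c fa_one)"
    and gen: "\<And>i. P (gen i)"
    and add: "\<And>f g. f \<in> fa_carrier \<Longrightarrow> g \<in> fa_carrier \<Longrightarrow> P f \<Longrightarrow> P g \<Longrightarrow> P (fa_add f g)"
    and mult: "\<And>f g. f \<in> fa_carrier \<Longrightarrow> g \<in> fa_carrier \<Longrightarrow> P f \<Longrightarrow> P g \<Longrightarrow> P (fa_mult f g)"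
  shows "P f"
proof -
  have mono_closed: "fa_mono w \<in> fa_carrier" for w
    unfolding fa_mono_def fa_carrier_def by simp
  have mono: "P (fa_mono w)" for w
  proof (induction w)
    case Nil
    have "fa_smul 1 fa_one = fa_mono []" by (rule ext) (simp add: fa_smul_def fa_one_def fa_mono_def)
    then show ?case using scalar[of 1] by simp
  next
    case (Cons i w)
    then show ?case using mult[OF gen_closed mono_closed gen Cons] by (simp add: gen_mult_fa_mono)
  qed
  have smul_mono: "P (fa_smul c (fa_mono w))" for c w
    using mult[OF fa_smul_closed[OF fa_one_closed] mono_closed scalar mono]
    by (simp add: fa_mult_smul_left)
  have "g \<in> fa_carrier \<Longrightarrow> {w. g w \<noteq> 0} \<subseteq> F \<Longrightarrow> P g" if "finite F" for F g
    using that
  proof (induction F arbitrary: g rule: finite_induct)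
    case empty
    then have "g = fa_smul 0 fa_one" by (auto simp: fa_smul_def)
    then show ?case using scalar by simp
  next
    case (insert w F)
    let ?h = "g(w := 0)"
    have h: "?h \<in> fa_carrier"
      using insert.prems(1) unfolding fa_carrier_def by (auto elim: finite_subset[rotated])
    moreover have "{v. ?h v \<noteq> 0} \<subseteq> F" using insert.prems(2) by auto
    ultimately have "P ?h" by (rule insert.IH)
    then have "P (fa_add (fa_smul (g w) (fa_mono w)) ?h)"
      by (rule add[OF fa_smul_closed[OF mono_closed] h smul_mono])
    moreover have "fa_add (fa_smul (g w) (fa_mono w)) ?h = g"
      by (rule ext) (simp add: fa_add_def fa_smul_def fa_mono_def)
    ultimately show ?case by simp
  qed
  then show ?thesis using f by (auto simp: fa_carrier_def)
qed

subsection \<open>The twisted reversal\<close>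

definition twist :: "int \<Rightarrow> int \<Rightarrow> fa \<Rightarrow> fa" where
  "twist a d f = (\<lambda>w. qq powi (a * int (length w)) * f (map (\<lambda>x. x + d) (rev w)))"

lemma qq_nonzero [simp]: "qq \<noteq> 0"
  unfolding qq_def by (simp add: eq_fract Zero_fract_def)

lemma twist_twist: "a + b = 0 \<Longrightarrow> d + e = 0 \<Longrightarrow> twist a d (twist b e f) = f"
proof (rule ext)
  fix w :: "int list" assume ab: "a + b = 0" and de: "d + e = 0"
  have "qq powi (a * int (length w)) * qq powi (b * int (length w)) = qq powi ((a + b) * int (length w))"
    by (simp add: power_int_add distrib_right)
  then have "qq powi (a * int (length w)) * qq powi (b * int (length w)) = 1"
    using ab by simp
  moreover have "map (\<lambda>x. x + e) (rev (map (\<lambda>x. x + d) (rev w))) = w"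
    using de by (simp add: rev_map o_def add.assoc)
  ultimately show "twist a d (twist b e f) w = f w"
    unfolding twist_def by (simp add: mult.assoc[symmetric])
qed

lemma inj_twist: "inj (twist a d)"
  by (metis injI twist_twist[of "-a" a "-d" d] add.left_inverse)

lemma twist_add: "twist a d (fa_add f g) = fa_add (twist a d f) (twist a d g)"
  by (rule ext) (simp add: twist_def fa_add_def distrib_left)

lemma twist_diff: "twist a d (fa_diff f g) = fa_diff (twist a d f) (twist a d g)"
  by (rule ext) (simp add: twist_def fa_diff_def right_diff_distrib)

lemma twist_smul: "twist a d (fa_smul c f) = fa_smul c (twist a d f)"
  by (rule ext) (simp add: twist_def fa_smul_def mult.left_commute)

lemma twist_one [simp]: "twist a d fa_one = fa_one"
  by (rule ext) (simp add: twist_def fa_one_def)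

lemma twist_zero [simp]: "twist a d fa_zero = fa_zero"
  by (rule ext) (simp add: twist_def fa_zero_def)

lemma twist_gen: "twist a d (gen i) = fa_smul (qq powi a) (gen (i - d))"
  by (rule ext) (auto simp: twist_def fa_smul_def gen_def)

lemma twist_closed: "f \<in> fa_carrier \<Longrightarrow> twist a d f \<in> fa_carrier"
proof -
  assume "f \<in> fa_carrier"
  moreover have "{w. twist a d f w \<noteq> 0} \<subseteq> (\<lambda>w. rev (map (\<lambda>x. x - d) w)) ` {w. f w \<noteq> 0}"
    by (auto simp: twist_def image_iff rev_map o_def intro!: exI[of _ "map (\<lambda>x. x + d) (rev _)"])
  ultimately show ?thesis
    unfolding fa_carrier_def by (auto intro: finite_subset)
qed

lemma twist_image_carrier: "twist a d ` fa_carrier = fa_carrier"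
proof
  show "fa_carrier \<subseteq> twist a d ` fa_carrier"
  proof
    fix g assume "g \<in> fa_carrier"
    then have "twist (-a) (-d) g \<in> fa_carrier" "g = twist a d (twist (-a) (-d) g)"
      by (simp_all add: twist_closed twist_twist)
    then show "g \<in> twist a d ` fa_carrier" by blast
  qed
qed (auto simp: twist_closed)

lemma twist_mult: "twist a d (fa_mult f g) = fa_mult (twist a d g) (twist a d f)"
proof (rule ext)
  fix w
  let ?m = "\<lambda>l. map (\<lambda>x. x + d) (rev l)" and ?u = "\<lambda>l. rev (map (\<lambda>x. x - d) l)"
  let ?s = "\<lambda>l. qq powi (a * int (length l))"
  have "twist a d (fa_mult f g) w = (\<Sum>p\<in>splits (?m w). ?s w * (f (fst p) * g (snd p)))"
    by (simp add: twist_def fa_mult_splits sum_distrib_left)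
  also have "\<dots> = (\<Sum>p\<in>splits w. (?s (fst p) * g (?m (fst p))) * (?s (snd p) * f (?m (snd p))))"
  proof (rule sym, rule sum.reindex_bij_witness[where
        i = "\<lambda>p. (?u (snd p), ?u (fst p))" and j = "\<lambda>p. (?m (snd p), ?m (fst p))"])
    fix p assume "p \<in> splits w"
    then have "w = fst p @ snd p" by (simp add: splits_def)
    then have "?s w = ?s (fst p) * ?s (snd p)"
      by (simp add: power_int_add distrib_left)
    then show "?s w * (f (fst (?m (snd p), ?m (fst p))) * g (snd (?m (snd p), ?m (fst p)))) =
        (?s (fst p) * g (?m (fst p))) * (?s (snd p) * f (?m (snd p)))"
      by (simp add: ac_simps)
  next
    fix p assume "p \<in> splits (?m w)"
    then have "rev (fst p @ snd p) = map (\<lambda>x. x + d) w"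
      by (simp add: splits_def rev_map)
    then have "map (\<lambda>x. x - d) (rev (fst p @ snd p)) = w" by (simp add: o_def)
    then show "(?u (snd p), ?u (fst p)) \<in> splits w" by (simp add: splits_def rev_map)
  qed (auto simp: splits_def rev_map o_def)
  also have "\<dots> = fa_mult (twist a d g) (twist a d f) w"
    by (simp add: fa_mult_splits twist_def)
  finally show "twist a d (fa_mult f g) w = fa_mult (twist a d g) (twist a d f) w" .
qed

lemma m3_smul: "m3 (fa_smul a x) (fa_smul b y) (fa_smul c z) = fa_smul (a * b * c) (m3 x y z)"
  by (simp add: m3_def fa_mult_smul_left fa_mult_smul_right ac_simps)

lemma twist_m3: "twist a d (m3 x y z) = m3 (twist a d z) (twist a d y) (twist a d x)"
  by (simp add: m3_def twist_mult fa_mult_assoc)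

definition comm_rel :: "K \<Rightarrow> int \<Rightarrow> int \<Rightarrow> fa" where
  "comm_rel c i j = fa_diff (fa_mult (gen i) (gen j)) (fa_smul c (fa_mult (gen j) (gen i)))"

definition serre_rel :: "K \<Rightarrow> K \<Rightarrow> K \<Rightarrow> int \<Rightarrow> int \<Rightarrow> fa" where
  "serre_rel x y z i j =
     fa_add (fa_add (fa_add (fa_smul x (m3 (gen i) (gen i) (gen j)))
                            (fa_smul (- qint2) (m3 (gen i) (gen j) (gen i))))
                    (fa_smul y (m3 (gen j) (gen i) (gen i))))
            (fa_smul z (gen i))"

lemma rels_eq: "rels eps =
    {comm_rel (qq powi bexp i j) i j | i j. \<bar>i - j\<bar> > 1}
  \<union> {serre_rel (qq powi 3) (qq powi (-3)) (qq powi eps * qint2) i (i + 1) | i. True}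
  \<union> {serre_rel (qq powi (-3)) (qq powi 3) (qq powi eps * qint2) i (i - 1) | i. True}"
  by (simp add: rels_def comm_rel_def serre_rel_def)

lemma relsv_eq: "relsv eps =
    {comm_rel (qq powi (- bexp i j)) i j | i j. \<bar>i - j\<bar> > 1}
  \<union> {serre_rel (qq powi (-3)) (qq powi 3) (qq powi (- eps) * qint2) i (i + 1) | i. True}
  \<union> {serre_rel (qq powi 3) (qq powi (-3)) (qq powi (- eps) * qint2) i (i - 1) | i. True}"
  by (simp add: relsv_def comm_rel_def serre_rel_def)

lemma comm_rel_closed: "comm_rel c i j \<in> fa_carrier"
  by (simp add: comm_rel_def fa_diff_closed fa_smul_closed fa_mult_closed)

lemma serre_rel_closed: "serre_rel x y z i j \<in> fa_carrier"
  by (simp add: serre_rel_def fa_add_closed fa_smul_closed m3_closed)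

lemma rels_closed: "rels eps \<subseteq> fa_carrier"
  by (auto simp: rels_eq comm_rel_closed serre_rel_closed)

lemma relsv_closed: "relsv eps \<subseteq> fa_carrier"
  by (auto simp: relsv_eq comm_rel_closed serre_rel_closed)

lemma twist_comm_rel:
  "twist a d (comm_rel c i j) = fa_smul (qq powi a * qq powi a) (comm_rel c (j - d) (i - d))"
  by (simp add: comm_rel_def twist_diff twist_smul twist_mult twist_gen
      fa_mult_smul_left fa_mult_smul_right mult.commute)
     (rule ext, simp add: fa_diff_def fa_smul_def algebra_simps)

lemma twist_serre_rel:
  "twist a d (serre_rel x y z i j) =
     fa_smul (qq powi a * qq powi a * qq powi a)
       (serre_rel y x (qq powi (- a) * (qq powi (- a) * z)) (i - d) (j - d))"
  unfolding serre_rel_def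
  by (simp add: twist_add twist_smul twist_m3 twist_gen m3_smul)
     (rule ext, simp add: fa_add_def fa_smul_def power_int_add power_int_minus field_simps)

lemma bexp_shift: "bexp (i + d) (j + d) = bexp i j"
  by (simp add: bexp_def)

lemma bexp_swap: "\<bar>i - j\<bar> > 1 \<Longrightarrow> bexp j i = - bexp i j"
  unfolding bexp_def by (cases "j < i") (auto simp: sgn_if abs_if)

lemma qq_powi_cancel:
  "qq powi a * (qq powi (- a) * c) = c" "qq powi (- a) * (qq powi a * c) = c"
  by (simp_all add: mult.assoc[symmetric] power_int_add[symmetric])

lemma twist_relsv:
  assumes "r \<in> relsv eps"
  shows "\<exists>c r'. r' \<in> rels eps \<and> twist (- eps) (- 1) r = fa_smul c r'"
  using assms unfolding relsv_eq
proof (elim UnE CollectE exE conjE)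
  fix i j assume ij: "\<bar>i - j\<bar> > 1" and r: "r = comm_rel (qq powi (- bexp i j)) i j"
  have "bexp (j + 1) (i + 1) = - bexp i j"
    using bexp_shift[of j 1 i] bexp_swap[OF ij] by simp
  moreover have "\<bar>(j + 1) - (i + 1)\<bar> > 1" using ij by arith
  ultimately have "comm_rel (qq powi (- bexp i j)) (j + 1) (i + 1) \<in> rels eps"
    unfolding rels_eq by (metis (mono_tags, lifting) UnI1 mem_Collect_eq)
  then show ?thesis by (auto simp: r twist_comm_rel)
next
  fix i assume "r = serre_rel (qq powi (-3)) (qq powi 3) (qq powi (- eps) * qint2) i (i + 1)"
  moreover have "serre_rel (qq powi 3) (qq powi (-3)) (qq powi eps * qint2) (i + 1) (i + 1 + 1)
      \<in> rels eps"
    unfolding rels_eq by blast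
  ultimately show ?thesis by (auto simp: twist_serre_rel qq_powi_cancel add.assoc)
next
  fix i assume "r = serre_rel (qq powi 3) (qq powi (-3)) (qq powi (- eps) * qint2) i (i - 1)"
  moreover have "serre_rel (qq powi (-3)) (qq powi 3) (qq powi eps * qint2) (i + 1) (i + 1 - 1)
      \<in> rels eps"
    unfolding rels_eq by blast
  ultimately show ?thesis by (auto simp: twist_serre_rel qq_powi_cancel)
qed

lemma twist_rels:
  assumes "r \<in> rels eps"
  shows "\<exists>c r'. r' \<in> relsv eps \<and> twist eps 1 r = fa_smul c r'"
  using assms unfolding rels_eq
proof (elim UnE CollectE exE conjE)
  fix i j assume ij: "\<bar>i - j\<bar> > 1" and r: "r = comm_rel (qq powi bexp i j) i j"
  have "bexp (j - 1) (i - 1) = - bexp i j"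
    using bexp_shift[of j "-1" i] bexp_swap[OF ij] by simp
  moreover have "\<bar>(j - 1) - (i - 1)\<bar> > 1" using ij by arith
  ultimately have "comm_rel (qq powi bexp i j) (j - 1) (i - 1) \<in> relsv eps"
    unfolding relsv_eq by (metis (mono_tags, lifting) UnI1 mem_Collect_eq minus_minus)
  then show ?thesis by (auto simp: r twist_comm_rel)
next
  fix i assume "r = serre_rel (qq powi 3) (qq powi (-3)) (qq powi eps * qint2) i (i + 1)"
  moreover have "serre_rel (qq powi (-3)) (qq powi 3) (qq powi (- eps) * qint2) (i - 1) (i - 1 + 1)
      \<in> relsv eps"
    unfolding relsv_eq by blast
  ultimately show ?thesis by (auto simp: twist_serre_rel qq_powi_cancel)
next
  fix i assume "r = serre_rel (qq powi (-3)) (qq powi 3) (qq powi eps * qint2) i (i - 1)"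
  moreover have "serre_rel (qq powi 3) (qq powi (-3)) (qq powi (- eps) * qint2) (i - 1) (i - 1 - 1)
      \<in> relsv eps"
    unfolding relsv_eq by blast
  ultimately show ?thesis by (auto simp: twist_serre_rel qq_powi_cancel)
qed

lemma ideal_El_ideal: "ideal (El_ideal eps) FA"
  unfolding El_ideal_def using rels_closed by (intro FA.genideal_ideal) simp

lemma ideal_Elv_ideal: "ideal (Elv_ideal eps) FA"
  unfolding Elv_ideal_def using relsv_closed by (intro FA.genideal_ideal) simp

lemma ideal_twist_preimage:
  assumes J: "ideal J FA"
  shows "ideal {x \<in> fa_carrier. twist a d x \<in> J} FA"
proof (rule idealI[OF ring_FA])
  interpret J: ideal J FA by (rule J)
  let ?P = "{x \<in> fa_carrier. twist a d x \<in> J}"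
  show "subgroup ?P (add_monoid FA)"
  proof (rule FA.add.subgroupI)
    have "fa_zero \<in> ?P" using J.additive_subgroup_axioms additive_subgroup.zero_closed by fastforce
    then show "?P \<noteq> {}" by blast
  next
    fix x assume "x \<in> ?P"
    then show "\<ominus>\<^bsub>FA\<^esub> x \<in> ?P"
      by (auto simp: a_inv_FA fa_smul_closed twist_smul fa_smul_in_ideal[OF J])
  next
    fix x y assume "x \<in> ?P" "y \<in> ?P"
    then show "x \<oplus>\<^bsub>FA\<^esub> y \<in> ?P"
      using J.a_closed by (auto simp: fa_add_closed twist_add)
  qed auto
qed (use ideal.I_r_closed[OF J] ideal.I_l_closed[OF J] twist_closed in
      \<open>auto simp: fa_mult_closed twist_mult\<close>)

lemma twist_genideal_subset:
  assumes S: "S \<subseteq> fa_carrier" and T: "T \<subseteq> fa_carrier"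
    and rel: "\<And>r. r \<in> S \<Longrightarrow> \<exists>c r'. r' \<in> T \<and> twist a d r = fa_smul c r'"
  shows "twist a d ` genideal FA S \<subseteq> genideal FA T"
proof -
  have ideal_T: "ideal (genideal FA T) FA"
    using T by (intro FA.genideal_ideal) simp
  have "S \<subseteq> {x \<in> fa_carrier. twist a d x \<in> genideal FA T}"
  proof
    fix r assume "r \<in> S"
    then obtain c r' where "r' \<in> T" "twist a d r = fa_smul c r'" using rel by blast
    moreover have "r' \<in> genideal FA T" using \<open>r' \<in> T\<close> T FA.genideal_self by auto
    ultimately show "r \<in> {x \<in> fa_carrier. twist a d x \<in> genideal FA T}"
      using \<open>r \<in> S\<close> S fa_smul_in_ideal[OF ideal_T] by auto
  qed
  then have "genideal FA S \<subseteq> {x \<in> fa_carrier. twist a d x \<in> genideal FA T}"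
    by (rule FA.genideal_minimal[OF ideal_twist_preimage[OF ideal_T]])
  then show ?thesis by auto
qed

lemma twist_Elv_ideal: "twist (- eps) (- 1) ` Elv_ideal eps = El_ideal eps"
proof
  show "twist (- eps) (- 1) ` Elv_ideal eps \<subseteq> El_ideal eps"
    unfolding Elv_ideal_def El_ideal_def
    by (rule twist_genideal_subset[OF relsv_closed rels_closed twist_relsv])
  have "twist eps 1 ` El_ideal eps \<subseteq> Elv_ideal eps"
    unfolding Elv_ideal_def El_ideal_def
    by (rule twist_genideal_subset[OF rels_closed relsv_closed twist_rels])
  then have "twist (- eps) (- 1) ` twist eps 1 ` El_ideal eps \<subseteq> twist (- eps) (- 1) ` Elv_ideal eps"
    by (rule image_mono)
  then show "El_ideal eps \<subseteq> twist (- eps) (- 1) ` Elv_ideal eps"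
    by (simp add: image_image twist_twist)
qed

subsection \<open>Anti-isomorphisms of quotients\<close>

lemma cls_ring_hom: "ideal I FA \<Longrightarrow> cls I \<in> ring_hom FA (FA Quot I)"
  unfolding cls_def[abs_def] by (rule ideal.rcos_ring_hom)

lemma cls_add: "ideal I FA \<Longrightarrow> f \<in> fa_carrier \<Longrightarrow> g \<in> fa_carrier \<Longrightarrow>
    cls I (fa_add f g) = cls I f \<oplus>\<^bsub>FA Quot I\<^esub> cls I g"
  using ring_hom_add[OF cls_ring_hom, of I f g] by simp

lemma cls_mult: "ideal I FA \<Longrightarrow> f \<in> fa_carrier \<Longrightarrow> g \<in> fa_carrier \<Longrightarrow>
    cls I (fa_mult f g) = cls I f \<otimes>\<^bsub>FA Quot I\<^esub> cls I g"
  using ring_hom_mult[OF cls_ring_hom, of I f g] by simp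

lemma cls_one: "ideal I FA \<Longrightarrow> cls I fa_one = \<one>\<^bsub>FA Quot I\<^esub>"
  using ring_hom_one[OF cls_ring_hom, of I] by simp

lemma carrier_FA_Quot: "carrier (FA Quot I) = cls I ` fa_carrier"
  unfolding FactRing_def A_RCOSETS_def RCOSETS_def cls_def a_r_coset_def by auto

lemma cls_closed: "f \<in> fa_carrier \<Longrightarrow> cls I f \<in> carrier (FA Quot I)"
  by (simp add: carrier_FA_Quot)

lemma twist_cls:
  assumes "twist a d ` I = J"
  shows "twist a d ` cls I f = cls J (twist a d f)"
proof -
  have "cls K g = (\<lambda>h. fa_add h g) ` K" for K g
    unfolding cls_def a_r_coset_def r_coset_def by auto
  then show ?thesis
    unfolding assms[symmetric] by (simp add: image_image twist_add)
qed

lemma anti_iso_twist: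
  assumes I: "ideal I FA" and J: "ideal J FA" and IJ: "twist a d ` I = J"
  shows "anti_iso I J (image (twist a d))"
  unfolding anti_iso_def
proof (intro conjI ballI allI)
  show "bij_betw (image (twist a d)) (carrier (FA Quot I)) (carrier (FA Quot J))"
  proof (rule bij_betw_imageI)
    show "inj_on (image (twist a d)) (carrier (FA Quot I))"
      by (rule inj_onI) (simp add: inj_image_eq_iff[OF inj_twist])
    have "image (twist a d) ` carrier (FA Quot I) = cls J ` (twist a d ` fa_carrier)"
      unfolding carrier_FA_Quot image_image by (simp add: twist_cls[OF IJ])
    then show "image (twist a d) ` carrier (FA Quot I) = carrier (FA Quot J)"
      by (simp add: twist_image_carrier carrier_FA_Quot)
  qed
  fix x y assume "x \<in> carrier (FA Quot I)" "y \<in> carrier (FA Quot I)"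
  then obtain f g where "f \<in> fa_carrier" "x = cls I f" "g \<in> fa_carrier" "y = cls I g"
    by (auto simp: carrier_FA_Quot)
  then show "twist a d ` (x \<oplus>\<^bsub>FA Quot I\<^esub> y) = twist a d ` x \<oplus>\<^bsub>FA Quot J\<^esub> twist a d ` y"
    and "twist a d ` (x \<otimes>\<^bsub>FA Quot I\<^esub> y) = twist a d ` y \<otimes>\<^bsub>FA Quot J\<^esub> twist a d ` x"
    by (simp_all add: cls_add[OF I, symmetric] cls_add[OF J, symmetric] cls_mult[OF I, symmetric]
        cls_mult[OF J, symmetric] twist_cls[OF IJ] fa_add_closed fa_mult_closed twist_closed
        twist_add twist_mult)
next
  fix c x assume "x \<in> carrier (FA Quot I)"
  then obtain f where "f \<in> fa_carrier" "x = cls I f"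
    by (auto simp: carrier_FA_Quot)
  then show "twist a d ` (cls I (fa_smul c fa_one) \<otimes>\<^bsub>FA Quot I\<^esub> x) =
      cls J (fa_smul c fa_one) \<otimes>\<^bsub>FA Quot J\<^esub> twist a d ` x"
    by (simp add: cls_mult[OF I, symmetric] cls_mult[OF J, symmetric] twist_cls[OF IJ]
        fa_mult_closed fa_smul_closed twist_closed twist_mult twist_smul
        fa_mult_smul_left fa_mult_smul_right)
next
  show "twist a d ` \<one>\<^bsub>FA Quot I\<^esub> = \<one>\<^bsub>FA Quot J\<^esub>"
    by (simp add: cls_one[OF I, symmetric] cls_one[OF J, symmetric] twist_cls[OF IJ])
qed

lemma anti_iso_add: "anti_iso I J t \<Longrightarrow> ideal I FA \<Longrightarrow> f \<in> fa_carrier \<Longrightarrow> g \<in> fa_carrier \<Longrightarrow>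
    t (cls I (fa_add f g)) = t (cls I f) \<oplus>\<^bsub>FA Quot J\<^esub> t (cls I g)"
  unfolding anti_iso_def by (simp add: cls_add cls_closed)

lemma anti_iso_mult: "anti_iso I J t \<Longrightarrow> ideal I FA \<Longrightarrow> f \<in> fa_carrier \<Longrightarrow> g \<in> fa_carrier \<Longrightarrow>
    t (cls I (fa_mult f g)) = t (cls I g) \<otimes>\<^bsub>FA Quot J\<^esub> t (cls I f)"
  unfolding anti_iso_def by (simp add: cls_mult cls_closed)

lemma anti_iso_scalar:
  assumes t: "anti_iso I J t" and I: "ideal I FA" and J: "ideal J FA"
  shows "t (cls I (fa_smul c fa_one)) = cls J (fa_smul c fa_one)"
proof -
  have c: "fa_smul c fa_one \<in> fa_carrier" by (simp add: fa_smul_closed)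
  have "t (cls I (fa_smul c fa_one)) = t (cls I (fa_smul c fa_one) \<otimes>\<^bsub>FA Quot I\<^esub> cls I fa_one)"
    by (simp add: cls_mult[OF I c fa_one_closed, symmetric])
  also have "\<dots> = cls J (fa_smul c fa_one) \<otimes>\<^bsub>FA Quot J\<^esub> t \<one>\<^bsub>FA Quot I\<^esub>"
    using t cls_closed[OF fa_one_closed, of I] unfolding anti_iso_def by (simp add: cls_one[OF I])
  also have "\<dots> = cls J (fa_smul c fa_one)"
    using t unfolding anti_iso_def by (simp add: cls_one[OF J, symmetric] cls_mult[OF J c, symmetric])
  finally show ?thesis .
qed

lemma anti_iso_unique:
  assumes t: "anti_iso I J t" and u: "anti_iso I J u" and I: "ideal I FA" and J: "ideal J FA"
    and gen: "\<And>i. t (cls I (gen i)) = u (cls I (gen i))"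
    and x: "x \<in> carrier (FA Quot I)"
  shows "t x = u x"
proof -
  obtain f where f: "f \<in> fa_carrier" and "x = cls I f"
    using x by (auto simp: carrier_FA_Quot)
  from f have "t (cls I f) = u (cls I f)"
  proof (induction rule: fa_induct)
    case (scalar c)
    show ?case by (simp add: anti_iso_scalar[OF t I J] anti_iso_scalar[OF u I J])
  next
    case (add f g)
    then show ?case by (simp add: anti_iso_add[OF t I] anti_iso_add[OF u I])
  next
    case (mult f g)
    then show ?case by (simp add: anti_iso_mult[OF t I] anti_iso_mult[OF u I])
  qed (rule gen)
  then show ?thesis using \<open>x = cls I f\<close> by simp
qed

theorem mainTheorem2:
  fixes eps :: int
  assumes "eps \<in> {1, -1}"
  shows "\<exists>s. anti_iso (Elv_ideal eps) (El_ideal eps) s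
           \<and> (\<forall>i. s (cls (Elv_ideal eps) (gen i))
                   = cls (El_ideal eps) (fa_smul (qq powi (- eps)) (gen (i + 1))))
           \<and> (\<forall>t. anti_iso (Elv_ideal eps) (El_ideal eps) t
                  \<and> (\<forall>i. t (cls (Elv_ideal eps) (gen i))
                        = cls (El_ideal eps) (fa_smul (qq powi (- eps)) (gen (i + 1))))
                  \<longrightarrow> (\<forall>x\<in>carrier (Elv eps). t x = s x))"
proof (intro exI conjI allI impI ballI)
  let ?s = "image (twist (- eps) (- 1))"
  show s: "anti_iso (Elv_ideal eps) (El_ideal eps) ?s"
    by (rule anti_iso_twist[OF ideal_Elv_ideal ideal_El_ideal twist_Elv_ideal])
  show s_gen: "?s (cls (Elv_ideal eps) (gen i)) =
      cls (El_ideal eps) (fa_smul (qq powi (- eps)) (gen (i + 1)))" for i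
    by (simp add: twist_cls[OF twist_Elv_ideal] twist_gen)
  fix t x
  assume "anti_iso (Elv_ideal eps) (El_ideal eps) t \<and>
    (\<forall>i. t (cls (Elv_ideal eps) (gen i)) = cls (El_ideal eps) (fa_smul (qq powi - eps) (gen (i + 1))))"
  moreover assume "x \<in> carrier (Elv eps)"
  ultimately show "t x = ?s x"
    using anti_iso_unique[OF _ s ideal_Elv_ideal ideal_El_ideal] s_gen by (auto simp: Elv_def)
qed

end
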